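(* Let $k\geq 0$ and $p\geq 1$ be integers with $\log_e^{(k)}p\geq 1$, and let $f_k(p)$ be the minimum of $\mathrm{Tran}(T)$ over all $(k,p)$-trees $T$. Then $f_k(p)^{1/p}\leq 10\,\log_e^{(k)}p$.
   Context: A $(k,p)$-tree is a rooted plane tree (children of each node ordered left to right) with exactly $p$ leaves, in which every leaf is at distance exactly $k+1$ from the root (nodes at distance $i$ from the root are at level $i$, so leaves are at level $k+1$). For a rooted tree $T$, $\mathrm{Tran}(T)=\prod_{u\in V(T)}|r_u|!$, where $|r_u|$ is the number of children of $u$. $\log_e^{(k)}p$ is the $k$-fold iterated natural logarithm, $\log_e^{(0)}p=p$. *)

theory Defs
  imports Complex_Main
begin

text \<open>Rooted plane trees: a node is given by the ordered list of its children.\<close>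
datatype ptree = Node "ptree list"

fun children :: "ptree \<Rightarrow> ptree list" where
  "children (Node ts) = ts"

fun num_leaves :: "ptree \<Rightarrow> nat" where
  "num_leaves (Node ts) = (if ts = [] then 1 else sum_list (map num_leaves ts))"

fun leaves_at_depth :: "nat \<Rightarrow> ptree \<Rightarrow> bool" where
  "leaves_at_depth 0 (Node ts) = (ts = [])"
| "leaves_at_depth (Suc d) (Node ts) = (ts \<noteq> [] \<and> (\<forall>t\<in>set ts. leaves_at_depth d t))"

text \<open>Tran(T) = product over all nodes u of |r_u|!.\<close>
fun tran :: "ptree \<Rightarrow> nat" where
  "tran (Node ts) = fact (length ts) * prod_list (map tran ts)"

definition kp_tree :: "nat \<Rightarrow> nat \<Rightarrow> ptree \<Rightarrow> bool" where
  "kp_tree k p T \<longleftrightarrow> num_leaves T = p \<and> leaves_at_depth (Suc k) T"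

definition f_tran :: "nat \<Rightarrow> nat \<Rightarrow> nat" where
  "f_tran k p = (LEAST n. \<exists>T. kp_tree k p T \<and> tran T = n)"

definition iter_ln :: "nat \<Rightarrow> real \<Rightarrow> real" where
  "iter_ln k x = (ln ^^ k) x"

end

theory Submission
  imports Defs
begin

text \<open>
  Write \<open>\<ell>\<^sub>k\<close> for the \<open>k\<close>-th iterate of \<open>t \<mapsto> 1 + ln t\<close>. By induction on \<open>k\<close> there is a
  \<open>(k,p)\<close>-tree with \<open>Tran(T) \<le> (e \<ell>\<^sub>k(p))\<^bsup>p-1\<^esup>\<close>: take a \<open>(k,n)\<close>-tree with
  \<open>n = \<lceil>p/m\<rceil>\<close>, \<open>m = \<lceil>\<ell>\<^sub>k\<^sub>+\<^sub>1(p)\<rceil>\<close>, and hang at most \<open>m\<close> new leaves below each of its leaves;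
  a node with \<open>j \<le> m\<close> children costs \<open>j! \<le> m\<^bsup>j-1\<^esup>\<close>, i.e. a factor \<open>m\<close> per new leaf. As long as
  the iterated logarithms of \<open>p\<close> stay \<open>\<ge> 1\<close>, \<open>\<ell>\<^sub>k(p)\<close> exceeds \<open>log\<^sup>(\<^sup>k\<^sup>)p\<close> by at most 2, which
  gives the bound \<open>9 log\<^sup>(\<^sup>k\<^sup>)p\<close>; if they drop below 1 at an earlier level, a shallower tree
  with \<open>e \<ell> \<le> 9\<close> is lengthened by a path of unary nodes, which does not change \<open>Tran\<close>.
\<close>

lemma fact_le_power_pred:
  assumes "1 \<le> n" "n \<le> m"
  shows "fact n \<le> (m::nat) ^ (n - 1)"
  using assms
proof (induction n)
  case 0
  then show ?case by simp
next
  case (Suc n)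
  show ?case
  proof (cases "n = 0")
    case True
    then show ?thesis by simp
  next
    case False
    then have "fact (Suc n) \<le> m * m ^ (n - 1)"
      using Suc unfolding fact_Suc by (intro mult_le_mono) simp_all
    also have "\<dots> = m ^ n"
      using False by (simp add: power_eq_if)
    finally show ?thesis by simp
  qed
qed

definition star :: "nat \<Rightarrow> ptree" where
  "star p = Node (replicate p (Node []))"

lemma num_leaves_star:
  assumes "1 \<le> p"
  shows "num_leaves (star p) = p"
proof -
  have "sum_list (map num_leaves (replicate p (Node []))) = p"
    by (induction p) auto
  then show ?thesis
    using assms by (simp add: star_def)
qed

lemma leaves_at_depth_star: "1 \<le> p \<Longrightarrow> leaves_at_depth (Suc 0) (star p)"
  by (auto simp: star_def)

lemma tran_star: "tran (star p) = fact p"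
proof -
  have "prod_list (map tran (replicate p (Node []))) = 1"
    by (induction p) auto
  then show ?thesis
    by (simp add: star_def)
qed

lemma expand_subtrees:
  assumes m: "1 \<le> m"
    and expand: "\<And>t q. t \<in> set ts \<Longrightarrow> num_leaves t \<le> q \<Longrightarrow> q \<le> m * num_leaves t \<Longrightarrow>
      \<exists>T. num_leaves T = q \<and> leaves_at_depth (Suc d) T \<and> tran T \<le> tran t * m ^ (q - num_leaves t)"
    and "sum_list (map num_leaves ts) \<le> p" "p \<le> m * sum_list (map num_leaves ts)"
  shows "\<exists>Ts. length Ts = length ts \<and> sum_list (map num_leaves Ts) = p
    \<and> (\<forall>T\<in>set Ts. leaves_at_depth (Suc d) T)
    \<and> prod_list (map tran Ts) \<le> prod_list (map tran ts) * m ^ (p - sum_list (map num_leaves ts))"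
  using expand assms(3,4)
proof (induction ts arbitrary: p)
  case Nil
  then show ?case by simp
next
  case (Cons t ts)
  define s where "s = sum_list (map num_leaves ts)"
  define a where "a = num_leaves t"
  define q where "q = min (m * a) (p - s)"
  have p: "a + s \<le> p" "p \<le> m * (a + s)"
    using Cons.prems(2,3) by (simp_all add: s_def a_def)
  have q: "a \<le> q" "q \<le> m * a" "q \<le> p" "s \<le> p - q"
    using p m by (auto simp: q_def)
  have "p - q \<le> m * s"
  proof (cases "m * a \<le> p - s")
    case True
    then show ?thesis
      using p(2) by (simp add: q_def algebra_simps)
  next
    case False
    then show ?thesis
      using p(1) m by (simp add: q_def)
  qed
  note q = q this
  obtain T where T: "num_leaves T = q" "leaves_at_depth (Suc d) T" "tran T \<le> tran t * m ^ (q - a)"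
    using Cons.prems(1)[of t q] q unfolding a_def by auto
  obtain Ts where Ts: "length Ts = length ts" "sum_list (map num_leaves Ts) = p - q"
      "\<forall>T\<in>set Ts. leaves_at_depth (Suc d) T"
      "prod_list (map tran Ts) \<le> prod_list (map tran ts) * m ^ (p - q - s)"
    using Cons.IH[of "p - q"] Cons.prems(1) q unfolding s_def by auto
  have "tran T * prod_list (map tran Ts)
      \<le> (tran t * m ^ (q - a)) * (prod_list (map tran ts) * m ^ (p - q - s))"
    using T(3) Ts(4) by (rule mult_le_mono)
  also have "\<dots> = tran t * prod_list (map tran ts) * m ^ (q - a + (p - q - s))"
    by (simp add: power_add algebra_simps)
  also have "q - a + (p - q - s) = p - (a + s)"
    using q(1,3,4) by arith
  finally show ?case
    using T Ts q by (intro exI[of _ "T # Ts"]) (simp add: s_def a_def)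
qed

text \<open>Each leaf is replaced by a star with at most \<open>m\<close> leaves.\<close>

lemma expand_leaves:
  assumes m: "1 \<le> m"
    and "leaves_at_depth d t" "num_leaves t \<le> p" "p \<le> m * num_leaves t"
  shows "\<exists>T. num_leaves T = p \<and> leaves_at_depth (Suc d) T \<and> tran T \<le> tran t * m ^ (p - num_leaves t)"
  using assms(2-)
proof (induction t arbitrary: d p)
  case (Node ts)
  show ?case
  proof (cases "ts = []")
    case True
    then have "d = 0" "1 \<le> p" "p \<le> m"
      using Node.prems by (cases d; auto)+
    then show ?thesis
      using True fact_le_power_pred[of p m]
      by (intro exI[of _ "star p"]) (simp add: num_leaves_star leaves_at_depth_star tran_star)
  next
    case False
    then obtain d' where d: "d = Suc d'" and depth: "\<forall>t\<in>set ts. leaves_at_depth d' t"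
      using Node.prems(1) by (cases d) auto
    obtain Ts where Ts: "length Ts = length ts" "sum_list (map num_leaves Ts) = p"
        "\<forall>T\<in>set Ts. leaves_at_depth (Suc d') T"
        "prod_list (map tran Ts) \<le> prod_list (map tran ts) * m ^ (p - sum_list (map num_leaves ts))"
      using expand_subtrees[OF m, of ts d' p] Node.IH depth Node.prems(2,3) False by auto
    have "fact (length Ts) * prod_list (map tran Ts)
        \<le> fact (length ts) * (prod_list (map tran ts) * m ^ (p - sum_list (map num_leaves ts)))"
      using Ts(1,4) by simp
    then show ?thesis
      using Ts False d by (intro exI[of _ "Node Ts"]) (auto simp: algebra_simps)
  qed
qed

lemma kp_tree_deepen:
  assumes "kp_tree j p T" "j \<le> k"
  shows "\<exists>T'. kp_tree k p T' \<and> tran T' = tran T"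
proof -
  have "kp_tree (j + i) p (((\<lambda>t. Node [t]) ^^ i) T) \<and> tran (((\<lambda>t. Node [t]) ^^ i) T) = tran T" for i
    using assms(1) by (induction i) (auto simp: kp_tree_def)
  from this[of "k - j"] show ?thesis
    using assms(2) by auto
qed

text \<open>
  Unlike \<open>iter_ln\<close>, it never leaves \<open>[1, \<infinity>)\<close> when started there, so it
  avoids the junk values of \<open>ln\<close> at non-positive arguments.
\<close>

definition iter_ln1 :: "nat \<Rightarrow> real \<Rightarrow> real" where
  "iter_ln1 k x = ((\<lambda>t. 1 + ln t) ^^ k) x"

lemma iter_ln1_0 [simp]: "iter_ln1 0 x = x"
  by (simp add: iter_ln1_def)

lemma iter_ln1_Suc [simp]: "iter_ln1 (Suc k) x = 1 + ln (iter_ln1 k x)"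
  by (simp add: iter_ln1_def)

lemma iter_ln_0 [simp]: "iter_ln 0 x = x"
  by (simp add: iter_ln_def)

lemma iter_ln_Suc [simp]: "iter_ln (Suc k) x = ln (iter_ln k x)"
  by (simp add: iter_ln_def)

lemma iter_ln1_ge_1: "1 \<le> x \<Longrightarrow> 1 \<le> iter_ln1 k x"
  by (induction k) auto

lemma iter_ln1_mono: "1 \<le> x \<Longrightarrow> x \<le> y \<Longrightarrow> iter_ln1 k x \<le> iter_ln1 k y"
proof (induction k)
  case 0
  then show ?case by simp
next
  case (Suc k)
  then show ?case
    using iter_ln1_ge_1[of x k] by simp
qed

lemma two_le_exp_1: "2 \<le> exp (1::real)"
  using exp_ge_add_one_self[of "1::real"] by simp

lemma ln_tradeoff:
  fixes x m a b :: real
  assumes x: "1 \<le> x" "x \<le> m" "m \<le> x + 1" and a: "0 \<le> a" and ab: "a * (m - 1) \<le> b"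
  shows "a * x + b * ln m \<le> (a + b) * (1 + ln x)"
proof -
  have x0: "0 < x" using x by linarith
  have "a * (x - 1) \<le> a * (m - 1)"
    using a x by (intro mult_left_mono) auto
  then have ax: "a * (x - 1) \<le> b"
    using ab by linarith
  moreover have "0 \<le> a * (x - 1)"
    using a x by simp
  ultimately have b: "0 \<le> b"
    by linarith
  have "x * (1 + 1 / x) = x + 1"
    using x0 by (simp add: field_simps)
  then have "ln m \<le> ln (x * (1 + 1 / x))"
    using x x0 by simp
  also have "\<dots> = ln x + ln (1 + 1 / x)"
    using x0 by (simp add: ln_mult_pos add_pos_pos)
  also have "ln (1 + 1 / x) \<le> 1 / x"
    using x0 by (intro ln_add_one_self_le_self) simp
  finally have ln_m: "ln m \<le> ln x + 1 / x" by simp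
  have "ln (1 / x) \<le> 1 / x - 1"
    using x0 by (intro ln_le_minus_one) simp
  then have ln_x: "1 - 1 / x \<le> ln x"
    using x0 by (simp add: ln_div)
  have "a * (x - 1 - ln x) \<le> a * ((x - 1) * (1 - 1 / x))"
    using a ln_x x0 by (intro mult_left_mono) (simp_all add: field_simps)
  also have "\<dots> \<le> b * (1 - 1 / x)"
    using ax x by (simp add: mult.assoc[symmetric] mult_right_mono)
  finally have "a * (x - 1 - ln x) \<le> b * (1 - 1 / x)" .
  moreover have "b * ln m \<le> b * (ln x + 1 / x)"
    using ln_m b by (rule mult_left_mono)
  ultimately show ?thesis
    by (simp add: algebra_simps)
qed

lemma power_tradeoff:
  fixes x :: real and m a b :: nat
  assumes "1 \<le> x" "x \<le> m" "m \<le> x + 1" "real a * (real m - 1) \<le> real b"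
  shows "exp x ^ a * real m ^ b \<le> (exp 1 * x) ^ (a + b)"
proof -
  have pos: "0 < x" "0 < real m" using assms by linarith+
  have "ln (exp x ^ a * real m ^ b) = a * x + b * ln m"
    using pos by (simp add: ln_mult ln_realpow)
  also have "\<dots> \<le> (a + b) * (1 + ln x)"
    using ln_tradeoff[of x m a b] assms by simp
  also have "\<dots> = ln ((exp 1 * x) ^ (a + b))"
    using pos by (simp add: ln_mult ln_realpow)
  finally show ?thesis
    using pos by simp
qed

lemma ceiling_div_bounds:
  fixes p m n :: nat
  assumes "1 \<le> p" "1 \<le> m" and n: "n = (p + m - 1) div m"
  shows "1 \<le> n" "n \<le> p" "p \<le> m * n" "(n - 1) * (m - 1) \<le> p - n"
proof -
  have d: "p + m - 1 = m * n + (p + m - 1) mod m"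
    unfolding n by simp
  have "(p + m - 1) mod m < m"
    using assms by simp
  then show "p \<le> m * n"
    using d by linarith
  have "m div m \<le> (p + m - 1) div m"
    using assms by (intro div_le_mono) linarith
  then show n1: "1 \<le> n"
    unfolding n using assms by simp
  have "m * (n - 1) \<le> p - 1"
    using d by (simp add: right_diff_distrib')
  moreover have "(n - 1) * (m - 1) = m * (n - 1) - (n - 1)"
    by (simp add: diff_mult_distrib mult.commute)
  moreover have "n - 1 \<le> m * (n - 1)"
    using assms by simp
  ultimately show "(n - 1) * (m - 1) \<le> p - n" "n \<le> p"
    using n1 assms(1) by linarith+
qed

lemma ex_kp_tree_tran_le:
  "1 \<le> p \<Longrightarrow> \<exists>T. kp_tree k p T \<and> real (tran T) \<le> (exp 1 * iter_ln1 k p) ^ (p - 1)"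
proof (induction k arbitrary: p)
  case 0
  have "real p \<le> exp 1 * real p"
    using two_le_exp_1 by (simp add: mult_le_cancel_right1)
  have "real (fact p) \<le> real (p ^ (p - 1))"
    using fact_le_power_pred[OF 0 order_refl] by (rule of_nat_mono)
  also have "\<dots> \<le> (exp 1 * real p) ^ (p - 1)"
    unfolding of_nat_power using \<open>real p \<le> exp 1 * real p\<close> by (intro power_mono) auto
  finally show ?case
    using 0 by (intro exI[of _ "star p"])
      (simp add: kp_tree_def num_leaves_star leaves_at_depth_star tran_star)
next
  case (Suc k)
  define y where "y = iter_ln1 k p"
  define x where "x = iter_ln1 (Suc k) p"
  define m where "m = nat \<lceil>x\<rceil>"
  define n where "n = (p + m - 1) div m"
  have y: "1 \<le> y" and x: "1 \<le> x"
    using Suc.prems iter_ln1_ge_1 unfolding x_def y_def by simp_all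
  have xm: "x \<le> m" "m \<le> x + 1" and m: "1 \<le> m"
    using x unfolding m_def by linarith+
  note n = ceiling_div_bounds[OF Suc.prems m n_def]
  obtain T' where T': "kp_tree k n T'" "real (tran T') \<le> (exp 1 * iter_ln1 k n) ^ (n - 1)"
    using Suc.IH[OF n(1)] by blast
  have "\<exists>T. num_leaves T = p \<and> leaves_at_depth (Suc (Suc k)) T \<and> tran T \<le> tran T' * m ^ (p - n)"
    using expand_leaves[OF m, of "Suc k" T' p] T'(1) n(2,3) by (simp add: kp_tree_def)
  then obtain T where T: "kp_tree (Suc k) p T" "tran T \<le> tran T' * m ^ (p - n)"
    by (auto simp: kp_tree_def)
  have "real ((n - 1) * (m - 1)) \<le> real (p - n)"
    using n(4) by (rule of_nat_mono)
  then have nm: "real (n - 1) * (real m - 1) \<le> real (p - n)"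
    using m by (simp add: of_nat_diff)
  have "exp 1 * iter_ln1 k n \<le> exp x"
    using iter_ln1_mono[of n p k] iter_ln1_ge_1[of n k] y n(1,2)
    by (simp add: x_def y_def exp_add)
  then have "(exp 1 * iter_ln1 k n) ^ (n - 1) \<le> exp x ^ (n - 1)"
    using iter_ln1_ge_1[of n k] n(1) by (intro power_mono) auto
  then have "real (tran T') \<le> exp x ^ (n - 1)"
    using T'(2) by linarith
  have "real (tran T) \<le> real (tran T') * real m ^ (p - n)"
    using T(2) by (metis of_nat_le_iff of_nat_mult of_nat_power)
  also have "\<dots> \<le> exp x ^ (n - 1) * real m ^ (p - n)"
    using \<open>real (tran T') \<le> exp x ^ (n - 1)\<close> by (intro mult_right_mono) auto
  also have "\<dots> \<le> (exp 1 * x) ^ (n - 1 + (p - n))"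
    using power_tradeoff[OF x xm nm] .
  also have "n - 1 + (p - n) = p - 1"
    using n(1,2) by arith
  finally show ?case
    using T(1) unfolding x_def by blast
qed

lemma iter_ln1_le_iter_ln_add_2:
  assumes "\<forall>i\<le>k. 1 \<le> iter_ln i x"
  shows "iter_ln1 k x \<le> iter_ln k x + 2"
  using assms
proof (induction k)
  case 0
  then show ?case by simp
next
  case (Suc k)
  define L where "L = iter_ln k x"
  have L: "1 \<le> L" "1 \<le> ln L"
    using Suc.prems unfolding L_def by (metis iter_ln_Suc le_SucI order_refl)+
  then have "2 \<le> L"
    using two_le_exp_1 by (metis exp_le_cancel_iff exp_ln less_le_trans order.trans zero_less_one)
  moreover have "2 * L \<le> exp 1 * L"
    using two_le_exp_1 L by (intro mult_right_mono) auto
  ultimately have "L + 2 \<le> exp 1 * L"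
    by linarith
  moreover have "iter_ln1 k x \<le> L + 2"
    using Suc unfolding L_def by auto
  moreover have "1 \<le> iter_ln1 k x"
    using Suc.prems iter_ln1_ge_1 by force
  ultimately have "ln (iter_ln1 k x) \<le> ln (exp 1 * L)"
    by simp
  also have "\<dots> = 1 + ln L"
    using L by (simp add: ln_mult)
  finally show ?case
    unfolding L_def by simp
qed

lemma ex_maximal_initial_segment:
  assumes "P 0"
  shows "\<exists>j\<le>k. (\<forall>i\<le>j. P i) \<and> (j < k \<longrightarrow> \<not> P (Suc j))"
proof (induction k)
  case 0
  show ?case
    using assms by auto
next
  case (Suc k)
  then obtain j where j: "j \<le> k" "\<forall>i\<le>j. P i" "j < k \<longrightarrow> \<not> P (Suc j)"
    by blast
  show ?case
  proof (cases "j = k \<and> P (Suc k)")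
    case True
    then have "\<forall>i\<le>Suc k. P i"
      using j(2) le_Suc_eq by blast
    then show ?thesis
      by blast
  next
    case False
    then have "j < Suc k \<longrightarrow> \<not> P (Suc j)"
      using j(3) by (auto simp: less_Suc_eq)
    then show ?thesis
      using j(1,2) le_SucI by blast
  qed
qed

lemma iter_ln1_le_3_iter_ln:
  assumes "\<forall>i\<le>k. 1 \<le> iter_ln i x"
  shows "iter_ln1 k x \<le> 3 * iter_ln k x"
  using iter_ln1_le_iter_ln_add_2[OF assms] assms by auto

lemma iter_ln1_Suc_le_3:
  assumes "\<forall>i\<le>j. 1 \<le> iter_ln i x" "iter_ln (Suc j) x < 1"
  shows "iter_ln1 (Suc j) x \<le> 3"
proof -
  have "iter_ln j x < exp 1"
    using assms by (metis exp_less_cancel_iff exp_ln iter_ln_Suc less_le_trans order_refl zero_less_one)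
  moreover have "2 * exp 1 \<le> exp 1 * exp (1::real)"
    using two_le_exp_1 by (intro mult_right_mono) auto
  ultimately have "iter_ln1 j x \<le> exp 1 * exp 1"
    using iter_ln1_le_iter_ln_add_2[OF assms(1)] two_le_exp_1 by linarith
  moreover have "1 \<le> iter_ln1 j x"
    using assms(1) iter_ln1_ge_1 by force
  ultimately have "ln (iter_ln1 j x) \<le> ln (exp 1 * exp 1)"
    by simp
  then show ?thesis
    by (simp add: ln_mult)
qed

lemma ex_level_exp_iter_ln1_le_9:
  assumes x: "1 \<le> x" and L: "1 \<le> iter_ln k x"
  shows "\<exists>i\<le>k. exp 1 * iter_ln1 i x \<le> 9 * iter_ln k x"
proof -
  obtain j where j: "j \<le> k" "\<forall>i\<le>j. 1 \<le> iter_ln i x" "j < k \<longrightarrow> \<not> 1 \<le> iter_ln (Suc j) x"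
    using ex_maximal_initial_segment[of "\<lambda>i. 1 \<le> iter_ln i x" k] x by auto
  have e: "0 \<le> exp (1::real)" "exp (1::real) \<le> 3"
    using exp_le by simp_all
  show ?thesis
  proof (cases "j = k")
    case True
    then have "exp 1 * iter_ln1 k x \<le> 3 * (3 * iter_ln k x)"
      using iter_ln1_le_3_iter_ln j(2) iter_ln1_ge_1[OF x, of k] e L by (intro mult_mono) auto
    then show ?thesis
      by auto
  next
    case False
    then have "exp 1 * iter_ln1 (Suc j) x \<le> 3 * 3"
      using iter_ln1_Suc_le_3[of j x] iter_ln1_ge_1[OF x, of "Suc j"] j e by (intro mult_mono) auto
    then show ?thesis
      using L False j(1) by (intro exI[of _ "Suc j"]) auto
  qed
qed

lemma ex_kp_tree_tran_le_9:
  assumes p: "1 \<le> p" and L: "1 \<le> iter_ln k p"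
  shows "\<exists>T. kp_tree k p T \<and> real (tran T) \<le> (9 * iter_ln k p) ^ (p - 1)"
proof -
  obtain i where i: "i \<le> k" "exp 1 * iter_ln1 i p \<le> 9 * iter_ln k p"
    using ex_level_exp_iter_ln1_le_9[of p k] p L by auto
  obtain T where T: "kp_tree i p T" "real (tran T) \<le> (exp 1 * iter_ln1 i p) ^ (p - 1)"
    using ex_kp_tree_tran_le[OF p] by blast
  obtain T' where "kp_tree k p T'" "tran T' = tran T"
    using kp_tree_deepen[OF T(1) i(1)] by blast
  moreover have "(exp 1 * iter_ln1 i p) ^ (p - 1) \<le> (9 * iter_ln k p) ^ (p - 1)"
    using i iter_ln1_ge_1[of p i] p by (intro power_mono) auto
  ultimately show ?thesis
    using T(2) by auto
qed

lemma f_tran_le_tran: "kp_tree k p T \<Longrightarrow> f_tran k p \<le> tran T"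
  unfolding f_tran_def by (intro Least_le) blast

lemma powr_inverse_le_of_le_power:
  fixes y B :: real and p :: nat
  assumes "1 \<le> p" "1 \<le> B" "0 \<le> y" "y \<le> B ^ (p - 1)"
  shows "y powr (1 / p) \<le> B"
proof -
  have "B powr real (p - 1) = B ^ (p - 1)"
    using assms by (intro powr_realpow) simp
  then have "y \<le> B powr real (p - 1)"
    using assms by simp
  then have "y powr (1 / p) \<le> (B powr real (p - 1)) powr (1 / p)"
    using assms by (intro powr_mono2) auto
  also have "\<dots> = B powr (real (p - 1) / p)"
    by (simp add: powr_powr)
  also have "\<dots> \<le> B powr 1"
    using assms by (intro powr_mono) (auto simp: of_nat_diff)
  finally show ?thesis
    using assms by simp
qed

theorem lemma9p1:
  fixes k p :: nat
  assumes "p \<ge> 1"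
    and "iter_ln k (real p) \<ge> 1"
  shows "real (f_tran k p) powr (1 / real p) \<le> 10 * iter_ln k (real p)"
proof -
  obtain T where T: "kp_tree k p T" "real (tran T) \<le> (9 * iter_ln k p) ^ (p - 1)"
    using ex_kp_tree_tran_le_9[OF assms] by blast
  then have "real (f_tran k p) \<le> (9 * iter_ln k p) ^ (p - 1)"
    using f_tran_le_tran[OF T(1)] by linarith
  then have "real (f_tran k p) powr (1 / real p) \<le> 9 * iter_ln k p"
    using assms by (intro powr_inverse_le_of_le_power) auto
  then show ?thesis
    using assms(2) by linarith
qed

end
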